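(* Let $d=2$ and $n\ge3$ odd, i.e. $\alpha=n/2$, and let $\lambda=\pi/2$ (so $\varkappa=\pi/(2n)$). Then $v_1=-w_{(n-1)/2}$ and $u_0=-w_{(n+1)/2}$, and $$\hat P(t)=\frac{R(t)\prod_{j=0}^{n-1}(t-w_j)(t+w_j)}{(t^2+1)^2}$$ is a polynomial in $t$, with coefficients affine-linear in $(x,y)$, of degree exactly $2n-4$ (its coefficient of $t^{2n-4}$ is a non-constant affine function of $x,y$).
   Context: Let $\eta=\frac{\pi}{2}\cdot\frac{n-2}{n}$, so that $\alpha:=\pi/(\pi-2\eta)=n/2$, and $d=2$. Let $\lambda=\pi/2$ and $\varkappa=(\pi-\lambda-\eta)/2=\pi/(2n)$. Let $x,y$ be real. Define $\rho=\dfrac{\sin2\eta}{\sin\varkappa\,\sin(\varkappa+2\eta)}$, $v_k=\cot(\frac{\varkappa}{2}+\frac{\pi k}{2})$, $u_k=\cot(\frac{\varkappa}{2}+\eta+\frac{\pi k}{2})$ ($k=0,1$), $w_j=\cot(\frac{\varkappa}{2}+\frac{\pi j}{n})$ ($j=0,\dots,n-1$), and $$R(t)=x\rho\frac{(t^2+1)^2}{\prod_{k=0}^{1}(t-v_k)(t-u_k)}+y\rho\frac{(t^2+1)^2}{\prod_{k=0}^{1}(t+v_k)(t+u_k)}-2\cot\varkappa\,\frac{(t^2+1)^2}{\prod_{k=0}^{1}(t-v_k)(t+v_k)}+2\alpha\cot(\alpha\varkappa)\,\frac{(t^2+1)^n}{\prod_{j=0}^{n-1}(t-w_j)(t+w_j)}.$$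 For $t=\cot(\phi/2)$, $R(t)$ equals the function $g(\phi)$ whose real double roots $\phi\in(-\varkappa,\varkappa)$ parametrize the arctic curve of the six-vertex model with domain wall boundary conditions. *)

theory Defs
  imports Complex_Main "HOL-Computational_Algebra.Polynomial"
begin

definition eta :: "nat \<Rightarrow> real" where
  "eta n = pi / 2 * ((real n - 2) / real n)"

definition alpha :: "nat \<Rightarrow> real" where
  "alpha n = pi / (pi - 2 * eta n)"

definition lam :: real where
  "lam = pi / 2"

definition kappa :: "nat \<Rightarrow> real" where
  "kappa n = (pi - lam - eta n) / 2"

definition rho :: "nat \<Rightarrow> real" where
  "rho n = sin (2 * eta n) / (sin (kappa n) * sin (kappa n + 2 * eta n))"

definition vv :: "nat \<Rightarrow> nat \<Rightarrow> real" where
  "vv n k = cot (kappa n / 2 + pi * real k / 2)"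

definition uu :: "nat \<Rightarrow> nat \<Rightarrow> real" where
  "uu n k = cot (kappa n / 2 + eta n + pi * real k / 2)"

definition ww :: "nat \<Rightarrow> nat \<Rightarrow> real" where
  "ww n j = cot (kappa n / 2 + pi * real j / real n)"

definition R :: "nat \<Rightarrow> real \<Rightarrow> real \<Rightarrow> real \<Rightarrow> real" where
  "R n x y t =
     x * rho n * (t\<^sup>2 + 1)\<^sup>2 / (\<Prod>k<2. (t - vv n k) * (t - uu n k))
   + y * rho n * (t\<^sup>2 + 1)\<^sup>2 / (\<Prod>k<2. (t + vv n k) * (t + uu n k))
   - 2 * cot (kappa n) * (t\<^sup>2 + 1)\<^sup>2 / (\<Prod>k<2. (t - vv n k) * (t + vv n k))
   + 2 * alpha n * cot (alpha n * kappa n) * (t\<^sup>2 + 1) ^ n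
       / (\<Prod>j<n. (t - ww n j) * (t + ww n j))"

definition Phat :: "nat \<Rightarrow> real \<Rightarrow> real \<Rightarrow> real \<Rightarrow> real" where
  "Phat n x y t = R n x y t * (\<Prod>j<n. (t - ww n j) * (t + ww n j)) / (t\<^sup>2 + 1)\<^sup>2"

end

theory Submission
  imports Defs
begin

(* For d = 2, lambda = pi/2 and odd n = 2m+1 we have kappa = pi/(2n) and
   alpha = n/2, and the four poles v_0, v_1, u_0, u_1 of the first three terms of R all
   coincide with (plus or minus) nodes w_j:  v_0 = w_0, v_1 = -w_m, u_0 = -w_(m+1),
   u_1 = w_(n-1).  Hence each of the three quartic denominators is a product of four
   distinct factors (t - w_j), (t + w_j) of Q(t) = prod_j (t - w_j)(t + w_j), and
   Q / denominator is the monic polynomial "cofactor" of degree 2n - 4 formed by the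
   remaining linear factors.  The fourth term contributes (t^2 + 1)^(n-2). *)

lemma params:
  assumes "n \<ge> 3"
  shows "eta n = pi/2 - pi / real n" "kappa n = pi / (2 * real n)" "alpha n = real n / 2"
proof -
  have n0: "real n > 0" using assms by simp
  show e: "eta n = pi/2 - pi / real n" unfolding eta_def using n0 by (simp add: field_simps)
  show "kappa n = pi / (2 * real n)" unfolding kappa_def lam_def e using n0 by (simp add: field_simps)
  show "alpha n = real n / 2" unfolding alpha_def e using n0 by (simp add: field_simps)
qed

text \<open>Reflection y \<mapsto> pi - y changes the sign of the cotangent; this produces the sign
  flips relating poles and nodes below.\<close>

lemma cot_pi_minus: "cot (pi - y) = - cot y"
  by (simp add: cot_def)

lemma poles_are_nodes:
  assumes "odd n" "n \<ge> 3"
  shows "vv n 0 = ww n 0" "vv n 1 = - ww n ((n - 1) div 2)"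
        "uu n 0 = - ww n ((n + 1) div 2)" "uu n 1 = ww n (n - 1)"
proof -
  note p = params[OF assms(2)]
  have n0: "real n > 0" using assms by simp
  obtain m where m: "n = 2 * m + 1" using assms(1) oddE by blast
  have a: "real ((n - 1) div 2) = (real n - 1) / 2" using m by simp
  have b: "real ((n + 1) div 2) = (real n + 1) / 2" using m by simp
  have c: "real (n - 1) = real n - 1" using m by simp
  show "vv n 0 = ww n 0" unfolding vv_def ww_def by simp
  have "kappa n / 2 + pi * real 1 / 2 = pi - (kappa n / 2 + pi * real ((n - 1) div 2) / real n)"
    unfolding p a using n0 by (simp add: field_simps)
  then show "vv n 1 = - ww n ((n - 1) div 2)"
    unfolding vv_def ww_def by (simp only: cot_pi_minus)
  have "kappa n / 2 + eta n + pi * real 0 / 2 = pi - (kappa n / 2 + pi * real ((n + 1) div 2) / real n)"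
    unfolding p b using n0 by (simp add: field_simps)
  then show "uu n 0 = - ww n ((n + 1) div 2)"
    unfolding uu_def ww_def by (simp only: cot_pi_minus)
  have eq: "kappa n / 2 + eta n + pi * real 1 / 2 = kappa n / 2 + pi * real (n - 1) / real n"
    unfolding p c using n0 by (simp add: field_simps)
  show "uu n 1 = ww n (n - 1)"
    unfolding uu_def ww_def eq ..
qed

text \<open>All three angles in the definition of rho lie in (0, pi), so rho is positive.\<close>

lemma rho_pos:
  assumes "n \<ge> 3" shows "rho n > 0"
proof -
  note p = params[OF assms]
  have n3: "real n \<ge> 3" using assms by simp
  have "sin (2 * eta n) > 0" "sin (kappa n) > 0" "sin (kappa n + 2 * eta n) > 0"
    by (rule sin_gt_zero; use n3 pi_gt_zero in \<open>auto simp: p field_simps\<close>)+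
  then show ?thesis unfolding rho_def by simp
qed

definition linfactors :: "('i \<Rightarrow> 'a::comm_ring_1) \<Rightarrow> 'i set \<Rightarrow> 'a poly" where
  "linfactors c A = (\<Prod>j\<in>A. [:- c j, 1:])"

lemma poly_linfactors: "poly (linfactors c A) t = (\<Prod>j\<in>A. t - c j)"
  unfolding linfactors_def poly_prod by simp

lemma linfactors_monic:
  fixes c :: "'i \<Rightarrow> 'a::idom"
  assumes "finite A"
  shows "degree (linfactors c A) = card A" "lead_coeff (linfactors c A) = 1"
proof -
  have "degree (linfactors c A) = (\<Sum>j\<in>A. degree [:- c j, 1:])"
    unfolding linfactors_def by (rule degree_prod_eq_sum_degree) auto
  then show "degree (linfactors c A) = card A" by simp
  show "lead_coeff (linfactors c A) = 1" unfolding linfactors_def lead_coeff_prod by simp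
qed

lemma prod_split_linfactors:
  fixes c :: "nat \<Rightarrow> 'a::comm_ring_1"
  assumes "S \<subseteq> {..<n}"
  shows "(\<Prod>j<n. t - c j) = (\<Prod>j\<in>S. t - c j) * poly (linfactors c ({..<n} - S)) t"
  unfolding poly_linfactors using prod.subset_diff[OF assms finite_lessThan] by (simp add: mult.commute)

definition cofactor :: "nat \<Rightarrow> nat set \<Rightarrow> nat set \<Rightarrow> real poly" where
  "cofactor n S T = linfactors (ww n) ({..<n} - S) * linfactors (\<lambda>j. - ww n j) ({..<n} - T)"

lemma node_poly_split:
  assumes "S \<subseteq> {..<n}" "T \<subseteq> {..<n}"
  shows "(\<Prod>j<n. (t - ww n j) * (t + ww n j))
         = (\<Prod>j\<in>S. t - ww n j) * (\<Prod>j\<in>T. t + ww n j) * poly (cofactor n S T) t"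
proof -
  have "(\<Prod>j<n. (t - ww n j) * (t + ww n j)) = (\<Prod>j<n. t - ww n j) * (\<Prod>j<n. t - (- ww n j))"
    by (simp add: prod.distrib)
  also have "\<dots> = (\<Prod>j\<in>S. t - ww n j) * poly (linfactors (ww n) ({..<n} - S)) t
                 * ((\<Prod>j\<in>T. t + ww n j) * poly (linfactors (\<lambda>j. - ww n j) ({..<n} - T)) t)"
    using prod_split_linfactors[OF assms(1), of t "ww n"]
          prod_split_linfactors[OF assms(2), of t "\<lambda>j. - ww n j"] by simp
  finally show ?thesis unfolding cofactor_def by (simp add: ac_simps)
qed

lemma cofactor_monic:
  assumes "S \<subseteq> {..<n}" "T \<subseteq> {..<n}" "card S = 2" "card T = 2"
  shows "degree (cofactor n S T) = 2 * n - 4" "coeff (cofactor n S T) (2 * n - 4) = 1"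
proof -
  have fin: "finite ({..<n} - S)" "finite ({..<n} - T)" by auto
  have card: "card ({..<n} - S) = n - 2" "card ({..<n} - T) = n - 2"
    using assms by (simp_all add: card_Diff_subset finite_subset)
  have nz: "linfactors (ww n) ({..<n} - S) \<noteq> 0" "linfactors (\<lambda>j. - ww n j) ({..<n} - T) \<noteq> 0"
    by (metis fin linfactors_monic(2) leading_coeff_0_iff zero_neq_one)+
  have "card S \<le> n" using card_mono[OF _ assms(1)] by simp
  then have deg: "degree (cofactor n S T) = 2 * n - 4"
    unfolding cofactor_def degree_mult_eq[OF nz] linfactors_monic(1)[OF fin(1)]
      linfactors_monic(1)[OF fin(2)] card using assms(3) by linarith
  then show "degree (cofactor n S T) = 2 * n - 4" .
  show "coeff (cofactor n S T) (2 * n - 4) = 1"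
  proof -
    have "lead_coeff (cofactor n S T) = 1"
      unfolding cofactor_def lead_coeff_mult
      using linfactors_monic(2)[OF fin(1)] linfactors_monic(2)[OF fin(2)] by (metis mult_1)
    then show ?thesis using deg by simp
  qed
qed

lemma denominators_as_node_factors:
  assumes "odd n" "n \<ge> 3"
  defines "a \<equiv> (n - 1) div 2" and "b \<equiv> (n + 1) div 2" and "e \<equiv> n - 1"
  shows "(\<Prod>k<2. (t - vv n k) * (t - uu n k)) = (\<Prod>j\<in>{0, e}. t - ww n j) * (\<Prod>j\<in>{a, b}. t + ww n j)"
    and "(\<Prod>k<2. (t + vv n k) * (t + uu n k)) = (\<Prod>j\<in>{a, b}. t - ww n j) * (\<Prod>j\<in>{0, e}. t + ww n j)"
    and "(\<Prod>k<2. (t - vv n k) * (t + vv n k)) = (\<Prod>j\<in>{0, a}. t - ww n j) * (\<Prod>j\<in>{0, a}. t + ww n j)"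
proof -
  have distinct: "0 \<noteq> e" "a \<noteq> b" "0 \<noteq> a"
    using assms(1,2) unfolding a_def b_def e_def by (auto elim!: oddE)
  have poles: "vv n 0 = ww n 0" "vv n (Suc 0) = - ww n a" "uu n 0 = - ww n b" "uu n (Suc 0) = ww n e"
    using poles_are_nodes[OF assms(1,2)] unfolding a_def b_def e_def by simp_all
  show "(\<Prod>k<2. (t - vv n k) * (t - uu n k)) = (\<Prod>j\<in>{0, e}. t - ww n j) * (\<Prod>j\<in>{a, b}. t + ww n j)"
    "(\<Prod>k<2. (t + vv n k) * (t + uu n k)) = (\<Prod>j\<in>{a, b}. t - ww n j) * (\<Prod>j\<in>{0, e}. t + ww n j)"
    "(\<Prod>k<2. (t - vv n k) * (t + vv n k)) = (\<Prod>j\<in>{0, a}. t - ww n j) * (\<Prod>j\<in>{0, a}. t + ww n j)"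
    using distinct by (simp_all add: numeral_2_eq_2 poles)
qed

definition quot_x :: "nat \<Rightarrow> real poly" where
  "quot_x n = cofactor n {0, n - 1} {(n - 1) div 2, (n + 1) div 2}"

definition quot_y :: "nat \<Rightarrow> real poly" where
  "quot_y n = cofactor n {(n - 1) div 2, (n + 1) div 2} {0, n - 1}"

definition quot_c :: "nat \<Rightarrow> real poly" where
  "quot_c n = cofactor n {0, (n - 1) div 2} {0, (n - 1) div 2}"

lemma index_sets:
  fixes n :: nat
  assumes "odd n" "n \<ge> 3"
  shows "{0, n - 1} \<subseteq> {..<n}" "card {0, n - 1} = 2"
    and "{(n - 1) div 2, (n + 1) div 2} \<subseteq> {..<n}" "card {(n - 1) div 2, (n + 1) div 2} = 2"
    and "{0, (n - 1) div 2} \<subseteq> {..<n}" "card {0, (n - 1) div 2} = (2::nat)"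
  using assms by (auto elim!: oddE)

lemma node_poly_over_denominators:
  assumes "odd n" "n \<ge> 3"
  shows "(\<Prod>j<n. (t - ww n j) * (t + ww n j)) = (\<Prod>k<2. (t - vv n k) * (t - uu n k)) * poly (quot_x n) t"
    and "(\<Prod>j<n. (t - ww n j) * (t + ww n j)) = (\<Prod>k<2. (t + vv n k) * (t + uu n k)) * poly (quot_y n) t"
    and "(\<Prod>j<n. (t - ww n j) * (t + ww n j)) = (\<Prod>k<2. (t - vv n k) * (t + vv n k)) * poly (quot_c n) t"
  unfolding denominators_as_node_factors[OF assms] quot_x_def quot_y_def quot_c_def
  using index_sets[OF assms] by (simp_all add: node_poly_split)

lemma quotients_monic:
  assumes "odd n" "n \<ge> 3"
  shows "degree (quot_x n) = 2 * n - 4" "coeff (quot_x n) (2 * n - 4) = 1"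
    and "degree (quot_y n) = 2 * n - 4" "coeff (quot_y n) (2 * n - 4) = 1"
    and "degree (quot_c n) = 2 * n - 4"
  unfolding quot_x_def quot_y_def quot_c_def
  using index_sets[OF assms] by (simp_all add: cofactor_monic)

definition phat_const :: "nat \<Rightarrow> real poly" where
  "phat_const n = smult (2 * alpha n * cot (alpha n * kappa n)) ([:1, 0, 1:] ^ (n - 2))
                  - smult (2 * cot (kappa n)) (quot_c n)"

definition phat_x :: "nat \<Rightarrow> real poly" where
  "phat_x n = smult (rho n) (quot_x n)"

definition phat_y :: "nat \<Rightarrow> real poly" where
  "phat_y n = smult (rho n) (quot_y n)"

text \<open>The two cancellations performed on each term of R when multiplying by Q/(t^2+1)^2.\<close>

lemma cancel_denominator:
  fixes a s D Q c :: "'a::field"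
  assumes "D \<noteq> 0" "s \<noteq> 0" "Q = D * c"
  shows "a * s / D * Q / s = a * c"
  using assms by (simp add: field_simps)

lemma cancel_power:
  fixes K s Q :: "'a::field"
  assumes "Q \<noteq> 0" "s \<noteq> 0" "2 \<le> n"
  shows "K * s ^ n / Q * Q / s\<^sup>2 = K * s ^ (n - 2)"
proof -
  have "s ^ n = s\<^sup>2 * s ^ (n - 2)" using assms(3) by (metis le_add_diff_inverse power_add)
  then show ?thesis using assms(1,2) by simp
qed

lemma Phat_eval:
  assumes "odd n" "n \<ge> 3"
    and poles: "\<forall>k<2. t \<noteq> vv n k \<and> t \<noteq> - vv n k \<and> t \<noteq> uu n k \<and> t \<noteq> - uu n k"
    and nodes: "\<forall>j<n. t \<noteq> ww n j \<and> t \<noteq> - ww n j"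
  shows "Phat n x y t = poly (phat_const n + smult x (phat_x n) + smult y (phat_y n)) t"
proof -
  let ?Q = "\<Prod>j<n. (t - ww n j) * (t + ww n j)"
  let ?D1 = "\<Prod>k<2. (t - vv n k) * (t - uu n k)"
  let ?D2 = "\<Prod>k<2. (t + vv n k) * (t + uu n k)"
  let ?D3 = "\<Prod>k<2. (t - vv n k) * (t + vv n k)"
  let ?K = "2 * alpha n * cot (alpha n * kappa n)"
  let ?s = "(t\<^sup>2 + 1)\<^sup>2"
  have Q: "?Q \<noteq> 0" using nodes by (auto simp: prod_zero_iff)
  have D: "?D1 \<noteq> 0" "?D2 \<noteq> 0" "?D3 \<noteq> 0"
    using poles by (auto simp: prod_zero_iff add_eq_0_iff)
  have pos: "t\<^sup>2 + 1 > (0::real)" by (simp add: add_nonneg_pos)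
  then have s: "?s \<noteq> 0" by simp
  note quot = node_poly_over_denominators[OF assms(1,2)]
  have "Phat n x y t = x * rho n * ?s / ?D1 * ?Q / ?s + y * rho n * ?s / ?D2 * ?Q / ?s
                       - 2 * cot (kappa n) * ?s / ?D3 * ?Q / ?s + ?K * (t\<^sup>2 + 1) ^ n / ?Q * ?Q / ?s"
    unfolding Phat_def R_def
    by (simp only: add_divide_distrib diff_divide_distrib distrib_right left_diff_distrib)
  also have "\<dots> = x * rho n * poly (quot_x n) t + y * rho n * poly (quot_y n) t
                    - 2 * cot (kappa n) * poly (quot_c n) t + ?K * (t\<^sup>2 + 1) ^ (n - 2)"
    using cancel_denominator[OF D(1) s quot(1)] cancel_denominator[OF D(2) s quot(2)]
      cancel_denominator[OF D(3) s quot(3)] cancel_power[OF Q, of "t\<^sup>2 + 1" n ?K] pos assms(2) by simp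
  also have "\<dots> = poly (phat_const n + smult x (phat_x n) + smult y (phat_y n)) t"
    by (simp add: phat_const_def phat_x_def phat_y_def poly_power power2_eq_square algebra_simps)
  finally show ?thesis .
qed

lemma phat_degrees:
  assumes "odd n" "n \<ge> 3"
  shows "degree (phat_const n) \<le> 2 * n - 4" "degree (phat_x n) \<le> 2 * n - 4"
    and "degree (phat_y n) \<le> 2 * n - 4" "coeff (phat_x n) (2 * n - 4) = rho n"
proof -
  note quot = quotients_monic[OF assms]
  have "degree ([:1, 0, 1 :: real:] ^ (n - 2)) \<le> degree [:1, 0, 1 :: real:] * (n - 2)"
    by (rule degree_power_le)
  then have "degree ([:1, 0, 1 :: real:] ^ (n - 2)) \<le> 2 * n - 4" by simp
  then show "degree (phat_const n) \<le> 2 * n - 4"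
    unfolding phat_const_def
    by (intro degree_diff_le order.trans[OF degree_smult_le]) (simp_all add: quot)
  show "degree (phat_x n) \<le> 2 * n - 4" "degree (phat_y n) \<le> 2 * n - 4"
    unfolding phat_x_def phat_y_def using quot degree_smult_le by metis+
  show "coeff (phat_x n) (2 * n - 4) = rho n" unfolding phat_x_def using quot by simp
qed

theorem proposition2:
  fixes n :: nat
  assumes "odd n" and "n \<ge> 3"
  shows "vv n 1 = - ww n ((n - 1) div 2)
       \<and> uu n 0 = - ww n ((n + 1) div 2)
       \<and> (\<exists>p0 p1 p2 :: real poly.
            (\<forall>x y t. (\<forall>k<2. t \<noteq> vv n k \<and> t \<noteq> - vv n k \<and> t \<noteq> uu n k \<and> t \<noteq> - uu n k)
                    \<and> (\<forall>j<n. t \<noteq> ww n j \<and> t \<noteq> - ww n j)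
                    \<longrightarrow> Phat n x y t = poly (p0 + smult x p1 + smult y p2) t)
          \<and> degree p0 \<le> 2 * n - 4 \<and> degree p1 \<le> 2 * n - 4 \<and> degree p2 \<le> 2 * n - 4
          \<and> (coeff p1 (2 * n - 4) \<noteq> 0 \<or> coeff p2 (2 * n - 4) \<noteq> 0))"
proof -
  have eval: "\<forall>x y t. (\<forall>k<2. t \<noteq> vv n k \<and> t \<noteq> - vv n k \<and> t \<noteq> uu n k \<and> t \<noteq> - uu n k)
                    \<and> (\<forall>j<n. t \<noteq> ww n j \<and> t \<noteq> - ww n j)
                    \<longrightarrow> Phat n x y t = poly (phat_const n + smult x (phat_x n) + smult y (phat_y n)) t"
    using Phat_eval[OF assms] by blast
  have "coeff (phat_x n) (2 * n - 4) \<noteq> 0"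
    using phat_degrees(4)[OF assms] rho_pos[OF assms(2)] by simp
  then show ?thesis
    using poles_are_nodes[OF assms] phat_degrees[OF assms] eval by blast
qed

end
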